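(* The sets ${\sf End}$, ${\sf FP}$ and ${\sf MT}$ of twisted endofunctions, twisted parking functions and twisted packed words are symmetric suboperads of ${\sf T}\mathbb{N}$ (i.e. each contains the unit $(0)$, is closed under all partial compositions $\circ_i$, and is stable under the action of the symmetric groups). Moreover, ${\sf MT}$ is generated, as a symmetric operad, by $00$ and $01$.
   Context: Let $\mathbb{N}$ be the additive monoid of nonnegative integers. ${\sf T}\mathbb{N}=\biguplus_{n\ge1}\mathbb{N}^n$, elements of arity $n$ being words $x=(x_1,\dots,x_n)$ of length $n$ over $\mathbb{N}$ (written without separators, e.g. $01=(0,1)$), with partial compositions $x\circ_i y:=(x_1,\dots,x_{i-1},x_i+y_1,\dots,x_i+y_m,x_{i+1},\dots,x_n)$ for $x$ of arity $n$, $y$ of arity $m$, $1\le i\le n$, and right action $x\cdot\sigma:=(x_{\sigma(1)},\dots,x_{\sigma(n)})$ for $\sigma\in\mathfrak{S}_n$; this is a symmetric set-operad with unit $(0)$. A word $u$ of length $n$ is a twisted endofunction (resp. twisted parking function, twisted packed word) if the word $(u_1+1,\dots,u_n+1)$ is an endofunction (a word over $\{1,\dots,n\}$) (resp. a parking function: its nondecreasing rearrangement $v$ satisfies $v_j\le j$ for all $j$; resp. a packed word: its set of letters is $\{1,\dots,k\}$ for some $k\ge1$). ${\sf End}$, ${\sf FP}$, ${\sf MT}$ denote the sets of all twisted endofunctions, twisted parking functions and twisted packed words respectively. The symmetric suboperad generated by a set $S$ is the smallest subset containing $S$ and the unit, closed under all $\circ_i$ and the symmetric group actions. *)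

theory Defs
  imports "HOL-Combinatorics.Permutations"
begin

text \<open>Elements of T N are nonempty words over nat (lists); arity = length.\<close>

definition TN :: "nat list set" where
  "TN = {x. x \<noteq> []}"

text \<open>Partial composition x o_i y, with 1 \<le> i \<le> length x (1-based index).\<close>
definition pcomp :: "nat list \<Rightarrow> nat \<Rightarrow> nat list \<Rightarrow> nat list" where
  "pcomp x i y = take (i - 1) x @ map (\<lambda>b. x ! (i - 1) + b) y @ drop i x"

definition ract :: "nat list \<Rightarrow> (nat \<Rightarrow> nat) \<Rightarrow> nat list" where
  "ract x \<sigma> = map (\<lambda>j. x ! (\<sigma> j - 1)) [1..<length x + 1]"

definition sym_suboperad :: "nat list set \<Rightarrow> bool" where
  "sym_suboperad S \<longleftrightarrow> S \<subseteq> TN \<and> [0] \<in> S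
     \<and> (\<forall>x\<in>S. \<forall>y\<in>S. \<forall>i. 1 \<le> i \<and> i \<le> length x \<longrightarrow> pcomp x i y \<in> S)
     \<and> (\<forall>x\<in>S. \<forall>\<sigma>. \<sigma> permutes {1..length x} \<longrightarrow> ract x \<sigma> \<in> S)"

inductive_set generated :: "nat list set \<Rightarrow> nat list set" for G where
  gen: "x \<in> G \<Longrightarrow> x \<in> generated G"
| unit: "[0] \<in> generated G"
| comp: "x \<in> generated G \<Longrightarrow> y \<in> generated G \<Longrightarrow> 1 \<le> i \<Longrightarrow> i \<le> length x
          \<Longrightarrow> pcomp x i y \<in> generated G"
| act: "x \<in> generated G \<Longrightarrow> \<sigma> permutes {1..length x} \<Longrightarrow> ract x \<sigma> \<in> generated G"

definition End :: "nat list set" where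
  "End = {u. u \<noteq> [] \<and> (\<forall>a\<in>set u. 1 \<le> a + 1 \<and> a + 1 \<le> length u)}"

definition FP :: "nat list set" where
  "FP = {u. u \<noteq> [] \<and> (let v = sort (map (\<lambda>a. a + 1) u) in \<forall>j\<in>{1..length u}. v ! (j - 1) \<le> j)}"

definition MT :: "nat list set" where
  "MT = {u. u \<noteq> [] \<and> (\<exists>k\<ge>1. set (map (\<lambda>a. a + 1) u) = {1..k})}"

end

theory Submission
  imports Defs
begin

text \<open>Membership in each of End, FP and MT depends only on the multiset of letters of a
  word, and the symmetric group acts on a word exactly by rearranging its letters; so all
  three sets are stable under the action. The composition x o_i y replaces the letter
  a = x_i by the letters of y shifted by a, which keeps letters below the arity (End) and
  keeps the letter set an initial segment (MT). A word of arity n is a twisted parking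
  function iff for every k \<le> n at least k of its letters are below k; in x o_i y the
  letters below k are those of x, except a when a < k, together with the shifts of the
  letters of y below k - a, and these two counts add up to enough. Finally, a twisted
  packed word with largest letter b arises, up to rearrangement, from a shorter one by
  substituting 00 at a letter b (if b occurs twice) or 01 at a letter b - 1 (if b occurs
  once), so MT is generated by 00 and 01.\<close>

section \<open>The symmetric group action rearranges letters\<close>

lemma length_ract [simp]: "length (ract x \<sigma>) = length x"
  by (simp add: ract_def del: upt_Suc)

lemma map_nth_pred_upt: "map (\<lambda>j. x ! (j - 1)) [1..<length x + 1] = x"
  by (rule nth_equalityI) (auto simp del: upt_Suc)

lemma mset_ract:
  assumes "\<sigma> permutes {1..length x}"
  shows "mset (ract x \<sigma>) = mset x"
proof -
  let ?n = "length x" and ?f = "\<lambda>j. x ! (j - 1)"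
  have ivl: "{1..<?n+1} = {1..?n}" by auto
  have "mset (ract x \<sigma>) = image_mset ?f (image_mset \<sigma> (mset_set {1..?n}))"
    by (simp only: ract_def map_map[symmetric] mset_map mset_upt ivl)
      (simp add: image_mset.compositionality o_def)
  also have "image_mset \<sigma> (mset_set {1..?n}) = mset_set {1..?n}"
    using assms by (simp add: image_mset_mset_set permutes_inj_on permutes_image)
  also have "image_mset ?f (mset_set {1..?n}) = mset x"
    by (simp only: mset_map[symmetric] mset_upt[symmetric] ivl[symmetric] map_nth_pred_upt)
  finally show ?thesis .
qed

lemma ex_permutes_ract_eq:
  assumes "mset y = mset x"
  obtains \<sigma> where "\<sigma> permutes {1..length x}" "ract x \<sigma> = y"
proof -
  let ?n = "length x"
  obtain p where p: "p permutes {..<?n}" "permute_list p x = y"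
    using mset_eq_permutation[OF assms] by blast
  define \<sigma> where "\<sigma> = (\<lambda>j. if j \<in> {1..?n} then Suc (p (j - 1)) else j)"
  have "\<sigma> ` {1..?n} = Suc ` p ` (\<lambda>j. j - 1) ` {1..?n}"
    unfolding \<sigma>_def by (auto simp: image_image)
  also have "(\<lambda>j. j - 1) ` {1..?n} = {..<?n}"
    by (auto simp: image_iff intro!: bexI[where x = "Suc _"])
  also have "p ` {..<?n} = {..<?n}" using p(1) by (simp add: permutes_image)
  also have "Suc ` {..<?n} = {1..?n}" by (simp add: image_Suc_lessThan)
  finally have img: "\<sigma> ` {1..?n} = {1..?n}" .
  then have "bij_betw \<sigma> {1..?n} {1..?n}"
    by (simp add: bij_betw_def eq_card_imp_inj_on)
  then have "\<sigma> permutes {1..?n}"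
    by (rule bij_imp_permutes) (auto simp: \<sigma>_def)
  moreover have "ract x \<sigma> = permute_list p x"
    unfolding ract_def permute_list_def
    by (rule nth_equalityI) (auto simp: \<sigma>_def simp del: upt_Suc)
  ultimately show thesis using p(2) that by simp
qed

lemma ract_closed_iff_mset_closed:
  "(\<forall>x\<in>S. \<forall>\<sigma>. \<sigma> permutes {1..length x} \<longrightarrow> ract x \<sigma> \<in> S) \<longleftrightarrow>
   (\<forall>x y. x \<in> S \<longrightarrow> mset y = mset x \<longrightarrow> y \<in> S)"
  by (metis ex_permutes_ract_eq mset_ract)

lemma sym_suboperadI:
  assumes "\<And>u. u \<in> S \<Longrightarrow> u \<noteq> []" "[0] \<in> S"
    and "\<And>x y i. x \<in> S \<Longrightarrow> y \<in> S \<Longrightarrow> 1 \<le> i \<Longrightarrow> i \<le> length x \<Longrightarrow> pcomp x i y \<in> S"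
    and "\<And>x y. x \<in> S \<Longrightarrow> mset y = mset x \<Longrightarrow> y \<in> S"
  shows "sym_suboperad S"
  using assms unfolding sym_suboperad_def TN_def ract_closed_iff_mset_closed by blast

lemma generated_mset_closed:
  "x \<in> generated G \<Longrightarrow> mset y = mset x \<Longrightarrow> y \<in> generated G"
  by (metis ex_permutes_ract_eq generated.act)

lemma generated_subset:
  assumes "sym_suboperad S" "G \<subseteq> S"
  shows "generated G \<subseteq> S"
proof
  fix x assume "x \<in> generated G"
  then show "x \<in> S"
    by induction (use assms in \<open>auto simp: sym_suboperad_def\<close>)
qed

section \<open>Letters of a partial composition\<close>

lemma length_pcomp:
  "1 \<le> i \<Longrightarrow> i \<le> length x \<Longrightarrow> length (pcomp x i y) = length x + length y - 1"
  by (simp add: pcomp_def)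

lemma mset_pcomp:
  assumes "1 \<le> i" "i \<le> length x"
  shows "mset (pcomp x i y) + {#x ! (i - 1)#} = mset x + mset (map (\<lambda>b. x ! (i - 1) + b) y)"
proof -
  have "x = take (i - 1) x @ x ! (i - 1) # drop i x"
    using assms id_take_nth_drop[of "i - 1" x] by simp
  then have "mset x = mset (take (i - 1) x @ x ! (i - 1) # drop i x)"
    by simp
  then show ?thesis by (simp add: pcomp_def)
qed

lemma set_pcomp:
  assumes "1 \<le> i" "i \<le> length x"
  shows "set (pcomp x i y) \<union> {x ! (i - 1)} = set x \<union> (\<lambda>b. x ! (i - 1) + b) ` set y"
  using arg_cong[OF mset_pcomp[OF assms, of y], of set_mset] by simp

section \<open>Twisted endofunctions\<close>

lemma End_iff: "u \<in> End \<longleftrightarrow> u \<noteq> [] \<and> (\<forall>a\<in>set u. a < length u)"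
  by (auto simp: End_def)

lemma pcomp_in_End:
  assumes x: "x \<in> End" and y: "y \<in> End" and i: "1 \<le> i" "i \<le> length x"
  shows "pcomp x i y \<in> End"
proof -
  let ?a = "x ! (i - 1)" and ?N = "length x + length y - 1"
  have a: "?a < length x" using x i by (auto simp: End_iff)
  have "y \<noteq> []" using y by (simp add: End_iff)
  have "b < ?N" if b: "b \<in> set x \<union> (\<lambda>c. ?a + c) ` set y" for b
  proof (cases "b \<in> set x")
    case True
    then show ?thesis using x \<open>y \<noteq> []\<close> by (cases y) (auto simp: End_iff)
  next
    case False
    then obtain c where "c \<in> set y" "b = ?a + c" using b by auto
    then show ?thesis using y a by (auto simp: End_iff)
  qed
  then have "\<forall>b\<in>set (pcomp x i y). b < ?N"
    using set_pcomp[OF i, of y] by blast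
  moreover have "length (pcomp x i y) = ?N" by (rule length_pcomp[OF i])
  moreover have "?N \<noteq> 0" using \<open>y \<noteq> []\<close> i by (cases y) auto
  ultimately show ?thesis by (auto simp: End_iff)
qed

section \<open>Twisted parking functions\<close>

definition num_below :: "nat list \<Rightarrow> nat \<Rightarrow> nat" where
  "num_below u k = length (filter (\<lambda>a. a < k) u)"

lemma num_below_mset: "num_below u k = size (filter_mset (\<lambda>a. a < k) (mset u))"
  unfolding num_below_def by (metis mset_filter size_mset)

lemma num_below_mono: "k \<le> k' \<Longrightarrow> num_below u k \<le> num_below u k'"
  unfolding num_below_def by (induction u) auto

lemma num_below_map_add: "num_below (map (\<lambda>b. a + b) y) k = num_below y (k - a)"
  unfolding num_below_def by (simp add: filter_map o_def) (metis less_diff_conv add.commute)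

lemma num_below_pcomp:
  assumes "1 \<le> i" "i \<le> length x"
  shows "num_below (pcomp x i y) k + (if x ! (i - 1) < k then 1 else 0)
         = num_below x k + num_below y (k - x ! (i - 1))"
proof -
  let ?a = "x ! (i - 1)"
  have "size (filter_mset (\<lambda>b. b < k) (mset (pcomp x i y) + {#?a#})) =
        size (filter_mset (\<lambda>b. b < k) (mset x + mset (map (\<lambda>b. ?a + b) y)))"
    using mset_pcomp[OF assms] by simp
  then have "num_below (pcomp x i y) k + (if ?a < k then 1 else 0)
      = num_below x k + num_below (map (\<lambda>b. ?a + b) y) k"
    by (auto simp: num_below_mset split: if_splits)
  then show ?thesis by (simp only: num_below_map_add)
qed

lemma sorted_take_le:
  assumes "sorted s" "s ! (k - 1) \<le> k" "1 \<le> k" "k \<le> length s"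
  shows "\<forall>a\<in>set (take k s). a \<le> k"
proof
  fix a assume "a \<in> set (take k s)"
  then obtain j where "j < k" "a = s ! j" by (auto simp: in_set_conv_nth)
  moreover have "s ! j \<le> s ! (k - 1)"
    using assms \<open>j < k\<close> by (intro sorted_nth_mono) auto
  ultimately show "a \<le> k" using assms(2) by simp
qed

lemma sorted_drop_gt:
  assumes "sorted s" "j < s ! (j - 1)" "1 \<le> j"
  shows "\<forall>a\<in>set (drop (j - 1) s). j < a"
proof
  fix a assume "a \<in> set (drop (j - 1) s)"
  then obtain i where "i < length s - (j - 1)" "a = s ! (j - 1 + i)"
    by (auto simp: in_set_conv_nth)
  moreover have "s ! (j - 1) \<le> s ! (j - 1 + i)"
    using assms(1) \<open>i < length s - (j - 1)\<close> by (intro sorted_nth_mono) auto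
  ultimately show "j < a" using assms(2) by simp
qed

lemma length_filter_take_drop:
  "length (filter P xs) = length (filter P (take n xs)) + length (filter P (drop n xs))"
  by (metis append_take_drop_id filter_append length_append)

lemma sorted_parking_iff_count:
  assumes "sorted s"
  shows "(\<forall>j\<in>{1..length s}. s ! (j - 1) \<le> j) \<longleftrightarrow>
         (\<forall>k\<in>{1..length s}. k \<le> length (filter (\<lambda>a. a \<le> k) s))"
proof (intro iffI ballI)
  fix k assume H: "\<forall>j\<in>{1..length s}. s ! (j - 1) \<le> j" and k: "k \<in> {1..length s}"
  then have "s ! (k - 1) \<le> k" by blast
  then have "filter (\<lambda>a. a \<le> k) (take k s) = take k s"
    using sorted_take_le[OF assms] k by simp
  then show "k \<le> length (filter (\<lambda>a. a \<le> k) s)"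
    using k length_filter_take_drop[of "\<lambda>a. a \<le> k" s k] by simp
next
  fix j assume H: "\<forall>k\<in>{1..length s}. k \<le> length (filter (\<lambda>a. a \<le> k) s)"
    and j: "j \<in> {1..length s}"
  show "s ! (j - 1) \<le> j"
  proof (rule ccontr)
    assume "\<not> ?thesis"
    then have "\<forall>a\<in>set (drop (j - 1) s). j < a"
      using sorted_drop_gt[OF assms] j by simp
    then have "filter (\<lambda>a. a \<le> j) (drop (j - 1) s) = []"
      by (auto simp: filter_empty_conv)
    then have "length (filter (\<lambda>a. a \<le> j) s) \<le> j - 1"
      using length_filter_take_drop[of "\<lambda>a. a \<le> j" s "j - 1"]
        length_filter_le[of "\<lambda>a. a \<le> j" "take (j - 1) s"] by simp
    moreover have "j \<le> length (filter (\<lambda>a. a \<le> j) s)" "1 \<le> j" using H j by auto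
    ultimately show False by simp
  qed
qed

lemma FP_iff: "u \<in> FP \<longleftrightarrow> u \<noteq> [] \<and> (\<forall>k\<in>{1..length u}. k \<le> num_below u k)"
proof -
  let ?v = "map (\<lambda>a. a + 1) u"
  have "length (filter (\<lambda>a. a \<le> k) (sort ?v)) = num_below u k" if "1 \<le> k" for k
  proof -
    have "length (filter (\<lambda>a. a \<le> k) (sort ?v)) = length (filter (\<lambda>a. a \<le> k) ?v)"
      by (metis mset_filter mset_sort size_mset)
    also have "\<dots> = num_below u k"
      unfolding num_below_def filter_map length_map using that
      by (metis (no_types, lifting) Suc_eq_plus1 Suc_le_eq comp_apply)
    finally show ?thesis .
  qed
  then show ?thesis
    unfolding FP_def Let_def using sorted_parking_iff_count[of "sort ?v"] by auto
qed

lemma FP_num_below: "u \<in> FP \<Longrightarrow> min k (length u) \<le> num_below u k"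
proof (cases "k = 0")
  case False
  assume "u \<in> FP"
  then have "min k (length u) \<le> num_below u (min k (length u))"
    using False by (auto simp: FP_iff)
  also have "\<dots> \<le> num_below u k" by (rule num_below_mono) simp
  finally show ?thesis .
qed simp

lemma pcomp_in_FP:
  assumes x: "x \<in> FP" and y: "y \<in> FP" and i: "1 \<le> i" "i \<le> length x"
  shows "pcomp x i y \<in> FP"
proof -
  let ?a = "x ! (i - 1)" and ?n = "length x" and ?m = "length y"
  have m: "1 \<le> ?m" using y by (cases y) (auto simp: FP_iff)
  have "?n \<le> num_below x ?n" using x by (auto simp: FP_iff)
  then have "\<forall>b\<in>set x. b < ?n" unfolding num_below_def
    by (metis length_filter_less linorder_not_less)
  then have a: "?a < ?n" using i by auto
  have len: "length (pcomp x i y) = ?n + ?m - 1" by (rule length_pcomp[OF i])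
  have "k \<le> num_below (pcomp x i y) k" if k: "1 \<le> k" "k \<le> ?n + ?m - 1" for k
  proof (cases "?a < k")
    case True
    have "min k ?n \<le> num_below x k" "min (k - ?a) ?m \<le> num_below y (k - ?a)"
      using FP_num_below[OF x] FP_num_below[OF y] by auto
    moreover have "k + 1 \<le> min k ?n + min (k - ?a) ?m"
      using True a m k by (simp split: split_min)
    moreover have "num_below (pcomp x i y) k + 1 = num_below x k + num_below y (k - ?a)"
      using num_below_pcomp[OF i, of y k] True by simp
    ultimately show ?thesis by linarith
  next
    case False
    then have "num_below (pcomp x i y) k = num_below x k"
      using num_below_pcomp[OF i, of y k] by (simp add: num_below_def)
    moreover have "min k ?n \<le> num_below x k" by (rule FP_num_below[OF x])
    ultimately show ?thesis using False a by simp
  qed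
  moreover have "pcomp x i y \<noteq> []" using len m i by auto
  ultimately show ?thesis by (simp add: FP_iff len)
qed

section \<open>Twisted packed words\<close>

lemma MT_iff: "u \<in> MT \<longleftrightarrow> u \<noteq> [] \<and> (\<exists>k\<ge>1. set u = {0..<k})"
proof -
  have "set (map (\<lambda>a. a + 1) u) = {1..k} \<longleftrightarrow> set u = {0..<k}" for k
  proof -
    have "{1..k} = Suc ` {0..<k}"
      by (simp add: image_Suc_atLeastLessThan atLeastLessThanSuc_atLeastAtMost)
    then show ?thesis by (simp only: set_map Suc_eq_plus1[symmetric] inj_image_eq_iff[OF inj_Suc])
  qed
  then show ?thesis by (simp add: MT_def)
qed

lemma pcomp_in_MT:
  assumes x: "x \<in> MT" and y: "y \<in> MT" and i: "1 \<le> i" "i \<le> length x"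
  shows "pcomp x i y \<in> MT"
proof -
  let ?a = "x ! (i - 1)"
  obtain p where p: "1 \<le> p" "set x = {0..<p}" using x by (auto simp: MT_iff)
  obtain q where q: "1 \<le> q" "set y = {0..<q}" using y by (auto simp: MT_iff)
  have "?a \<in> set x" using i by auto
  then have "?a < p" using p(2) by simp
  have "?a + 0 \<in> set (map (\<lambda>b. ?a + b) y)" using q by simp
  then have "?a \<in> set (pcomp x i y)" by (simp add: pcomp_def)
  then have "set (pcomp x i y) = set (pcomp x i y) \<union> {?a}" by blast
  also have "\<dots> = set x \<union> (\<lambda>b. ?a + b) ` set y" by (rule set_pcomp[OF i])
  also have "\<dots> = {0..<p} \<union> {?a..<?a + q}"
    by (simp add: p(2) q(2) image_add_atLeastLessThan add.commute)
  also have "\<dots> = {0..<max p (?a + q)}"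
    using \<open>?a < p\<close> by (auto simp: max_def)
  finally have "set (pcomp x i y) = {0..<max p (?a + q)}" .
  then show ?thesis
    using p(1) \<open>?a \<in> set (pcomp x i y)\<close> unfolding MT_iff by (intro conjI exI) auto
qed

lemma End_mset_closed: "u \<in> End \<Longrightarrow> mset v = mset u \<Longrightarrow> v \<in> End"
  using mset_eq_setD[of v u] mset_eq_length[of v u] by (auto simp: End_iff)

lemma FP_mset_closed: "u \<in> FP \<Longrightarrow> mset v = mset u \<Longrightarrow> v \<in> FP"
  using mset_eq_length[of v u] by (auto simp: FP_iff num_below_mset)

lemma MT_mset_closed: "u \<in> MT \<Longrightarrow> mset v = mset u \<Longrightarrow> v \<in> MT"
  using mset_eq_setD[of v u] by (auto simp: MT_iff)

lemma sym_suboperad_End: "sym_suboperad End"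
  by (rule sym_suboperadI[OF _ _ pcomp_in_End End_mset_closed]) (auto simp: End_iff)

lemma sym_suboperad_FP: "sym_suboperad FP"
  by (rule sym_suboperadI[OF _ _ pcomp_in_FP FP_mset_closed]) (auto simp: FP_iff num_below_def)

lemma sym_suboperad_MT: "sym_suboperad MT"
  by (rule sym_suboperadI[OF _ _ pcomp_in_MT MT_mset_closed]) (auto simp: MT_iff)

section \<open>Generators of MT\<close>

lemma MT_generators: "{[0,0], [0,1]} \<subseteq> MT"
proof -
  have "[0, 0] \<in> MT" unfolding MT_iff by (intro conjI exI[of _ 1]) auto
  moreover have "[0, 1] \<in> MT" unfolding MT_iff by (intro conjI exI[of _ 2]) auto
  ultimately show ?thesis by simp
qed

lemma MT_reduce:
  assumes "u \<in> MT" "2 \<le> length u"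
  obtains u' g p where "u' \<in> MT" "length u' < length u" "g \<in> {[0,0], [0,1]}"
    "p < length u'" "mset u = mset (pcomp u' (Suc p) g)"
proof -
  obtain k where k: "1 \<le> k" "set u = {0..<k}" using assms(1) by (auto simp: MT_iff)
  let ?b = "k - 1"
  define u' where "u' = remove1 ?b u"
  have "?b \<in> set u" using k by auto
  then have mu: "mset u = mset u' + {#?b#}" and lu': "length u' = length u - 1"
    by (simp_all add: u'_def length_remove1)
  have su: "set u = insert ?b (set u')"
    using arg_cong[OF mu, of set_mset] by simp
  have ne: "u' \<noteq> []" using lu' assms(2) by auto
  have less: "length u' < length u" using lu' assms(2) by simp
  show thesis
  proof (cases "?b \<in> set u'")
    case True
    then have "set u' = {0..<k}" using su k(2) by (simp add: insert_absorb)
    then have "u' \<in> MT" using k(1) ne by (auto simp: MT_iff)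
    obtain p where p: "p < length u'" "u' ! p = ?b" using True by (auto simp: in_set_conv_nth)
    have "mset u = mset (pcomp u' (Suc p) [0,0])"
      using mset_pcomp[of "Suc p" u' "[0,0]"] p mu by simp
    with \<open>u' \<in> MT\<close> less p(1) show thesis by (intro that[of u' "[0,0]" p]) simp_all
  next
    case False
    then have "set u' = set u - {?b}" using su by auto
    also have "\<dots> = {0..<?b}" using k by (cases k) (auto simp: atLeastLessThanSuc)
    finally have s': "set u' = {0..<?b}" .
    then have b: "1 \<le> ?b" using ne by (cases ?b) auto
    then have "u' \<in> MT" using ne s' by (auto simp: MT_iff)
    have "?b - 1 \<in> set u'" using s' b by simp
    then obtain p where p: "p < length u'" "u' ! p = ?b - 1" by (auto simp: in_set_conv_nth)
    have "mset u = mset (pcomp u' (Suc p) [0,1])"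
      using mset_pcomp[of "Suc p" u' "[0,1]"] p mu b by simp
    with \<open>u' \<in> MT\<close> less p(1) show thesis by (intro that[of u' "[0,1]" p]) simp_all
  qed
qed

lemma MT_subset_generated: "MT \<subseteq> generated {[0,0], [0,1]}"
proof
  fix u assume "u \<in> MT"
  then show "u \<in> generated {[0,0], [0,1]}"
  proof (induction "length u" arbitrary: u rule: less_induct)
    case less
    show ?case
    proof (cases "2 \<le> length u")
      case True
      with less.prems obtain u' g p where "u' \<in> MT" "length u' < length u"
        "g \<in> {[0,0], [0,1]}" "p < length u'" "mset u = mset (pcomp u' (Suc p) g)"
        by (rule MT_reduce)
      then have "pcomp u' (Suc p) g \<in> generated {[0,0], [0,1]}"
        by (intro generated.comp less.hyps generated.gen) simp_all
      then show ?thesis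
        using \<open>mset u = mset (pcomp u' (Suc p) g)\<close> by (rule generated_mset_closed)
    next
      case False
      moreover have "u \<noteq> []" using less.prems by (simp add: MT_iff)
      ultimately have "length u = 1" by (simp add: not_le less_2_cases_iff)
      then obtain c where "u = [c]" by (auto simp: length_Suc_conv)
      obtain k where "1 \<le> k" "set u = {0..<k}" using less.prems by (auto simp: MT_iff)
      then have "0 \<in> set u" by simp
      with \<open>u = [c]\<close> have "u = [0]" by simp
      then show ?thesis by (simp add: generated.unit)
    qed
  qed
qed

theorem mainTheorem2:
  shows "sym_suboperad End \<and> sym_suboperad FP \<and> sym_suboperad MT
         \<and> MT = generated {[0,0], [0,1]}"
proof (intro conjI sym_suboperad_End sym_suboperad_FP sym_suboperad_MT)
  show "MT = generated {[0,0], [0,1]}"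
    using MT_subset_generated generated_subset[OF sym_suboperad_MT MT_generators]
    by (rule subset_antisym)
qed

end
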